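(* Consider the setting and algorithm described in the context, and assume: (A2) each $\mathcal{L}_j$ is differentiable with $\|\nabla\mathcal{L}_j(x)-\nabla\mathcal{L}_j(y)\|\le L\|x-y\|$ for all $x,y$; (A4-I) there are constants $\delta>0$ and $\tau\ge0$ with $\gamma(\rho)>3L+2L\delta\tau$ and $\rho>\frac{2L\tau}{\delta}$. Then for the iterates of EDANNI, for every $t\ge1$, with $\Delta^{(t)}:=x^{t+1}-x^t$, $\frac{\rho}{2}\|x^{t+1}-x^t\|^2+h(x^{t+1})-\frac{\rho}{2}\|x^t-x^{t-1}\|^2-h(x^t)\le-\Big\langle\nabla\mathcal{L}_1(x^{t+1})+\frac1m\sum_{j=1}^m\nabla\mathcal{L}_j(x^{t_j})-\nabla\mathcal{L}_1(x^{t_1}),\,\Delta^{(t)}\Big\rangle-\frac{\gamma(\rho)}{2}\|\Delta^{(t)}\|^2-\frac{\rho}{2}\|\Delta^{(t-1)}\|^2.$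
   Context: Problem setting: integers $m\ge 2$, $n\ge1$, $p\ge1$. For $j\in[m]$, $i\in[n]$, $l_{ji}:\mathbb{R}^p\to\mathbb{R}$ are smooth (possibly nonconvex) loss functions, and $h:\mathbb{R}^p\to\mathbb{R}\cup\{+\infty\}$ is proper, lower semicontinuous and convex. Let $\mathcal{L}_j(x)=\frac1n\sum_{i\in[n]}l_{ji}(x)$. Machine $1$ is the master. Algorithm EDANNI: given $x^0$ and $\rho\ge0$, at each iteration $t=0,1,\dots$ there is a set $\mathcal{A}_t\subseteq[m]$ of machines whose gradients arrive at iteration $t$, with $\mathcal{A}_0=[m]$; $t_j$ is the latest iteration $s\le t$ with $j\in\mathcal{A}_s$ (with $t_1=t$). The master updates $x^{t+1}=\arg\min_{x}\ \mathcal{L}_1(x)+h(x)+\frac{\rho}{2}\|x-x^t\|^2+\Big\langle \frac1m\sum_{j\in[m]}\nabla\mathcal{L}_j(x^{t_j})-\nabla\mathcal{L}_1(x^{t_1}),\,x-x^t\Big\rangle.$ $\gamma(\rho)$ denotes the convex (strong convexity) modulus of $x\mapsto h(x)+\frac{\rho}{2}\|x-x^t\|^2$. *)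

theory Defs
  imports "HOL-Analysis.Analysis" "HOL-Library.Extended_Real"
begin

definition proper_fun :: "('a \<Rightarrow> ereal) \<Rightarrow> bool" where
  "proper_fun f \<longleftrightarrow> (\<forall>x. f x \<noteq> -\<infinity>) \<and> (\<exists>x. f x \<noteq> \<infinity>)"

definition lsc_fun :: "('a::topological_space \<Rightarrow> ereal) \<Rightarrow> bool" where
  "lsc_fun f \<longleftrightarrow> (\<forall>x. f x \<le> Liminf (at x) f)"

definition strongly_convex_ereal :: "real \<Rightarrow> ('a::real_normed_vector \<Rightarrow> ereal) \<Rightarrow> bool" where
  "strongly_convex_ereal mu f \<longleftrightarrow>
     (\<forall>x y. \<forall>u\<in>{0<..<1::real}.
        f ((1 - u) *\<^sub>R x + u *\<^sub>R y)
          \<le> ereal (1 - u) * f x + ereal u * f y - ereal (mu / 2 * u * (1 - u) * (norm (x - y))\<^sup>2))"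

definition convex_ereal :: "('a::real_normed_vector \<Rightarrow> ereal) \<Rightarrow> bool" where
  "convex_ereal f \<longleftrightarrow> strongly_convex_ereal 0 f"

definition Lloc :: "nat \<Rightarrow> (nat \<Rightarrow> nat \<Rightarrow> 'a \<Rightarrow> real) \<Rightarrow> nat \<Rightarrow> 'a \<Rightarrow> real" where
  "Lloc n l j x = (1 / real n) * (\<Sum>i\<in>{1..n}. l j i x)"

text \<open>t_j: latest iteration s \<le> t at which machine j's gradient arrived; t_1 = t.\<close>
definition delay :: "(nat \<Rightarrow> nat set) \<Rightarrow> nat \<Rightarrow> nat \<Rightarrow> nat" where
  "delay A t j = (if j = 1 then t else (GREATEST s. s \<le> t \<and> j \<in> A s))"

definition corr :: "nat \<Rightarrow> (nat \<Rightarrow> 'a \<Rightarrow> 'a::real_vector) \<Rightarrow> (nat \<Rightarrow> nat set) \<Rightarrow> (nat \<Rightarrow> 'a) \<Rightarrow> nat \<Rightarrow> 'a" where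
  "corr m g A x t = (1 / real m) *\<^sub>R (\<Sum>j\<in>{1..m}. g j (x (delay A t j))) - g 1 (x (delay A t 1))"

end

theory Submission
  imports Defs
begin

text \<open>The master update is a proximal step whose objective is the smooth local loss plus the
\<open>\<gamma>(\<rho>)\<close>-strongly convex function \<open>h + \<rho>/2 \<parallel>\<cdot> - x\<^sup>t\<parallel>\<^sup>2\<close>. Comparing its minimiser \<open>x\<^sup>t\<^sup>+\<^sup>1\<close> with the points
of the segment towards \<open>x\<^sup>t\<close>, using strong convexity on that segment, dividing by the step length
and letting it tend to \<open>0\<close> yields the first-order optimality inequality, which is the claim after
adding and subtracting \<open>\<rho>/2 \<parallel>x\<^sup>t - x\<^sup>t\<^sup>-\<^sup>1\<parallel>\<^sup>2\<close>.\<close>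

lemma gderiv_difference_quotient_at_right:
  fixes f :: "'a::real_inner \<Rightarrow> real"
  assumes "GDERIV f z :> g"
  shows "((\<lambda>s. (f (z + s *\<^sub>R d) - f z) / s) \<longlongrightarrow> inner g d) (at_right 0)"
proof -
  have "(f has_derivative (\<lambda>v. inner g v)) (at z)"
    using assms by (simp add: gderiv_def inner_commute)
  moreover have "((\<lambda>s::real. z + s *\<^sub>R d) has_derivative (\<lambda>s. s *\<^sub>R d)) (at 0)"
    by (auto intro!: derivative_eq_intros)
  ultimately have "((\<lambda>s::real. f (z + s *\<^sub>R d)) has_derivative (\<lambda>s. s * inner g d)) (at 0)"
    using has_derivative_compose[of "\<lambda>s. z + s *\<^sub>R d"] by fastforce
  then have "((\<lambda>s::real. f (z + s *\<^sub>R d)) has_real_derivative inner g d) (at 0)"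
    by (simp add: has_field_derivative_def mult.commute[of _ "inner g d"])
  then have "((\<lambda>s. (f (z + s *\<^sub>R d) - f z) / s) \<longlongrightarrow> inner g d) (at 0)"
    by (simp add: DERIV_def)
  then show ?thesis
    by (rule tendsto_mono[OF at_le, rotated]) simp
qed

lemma gderiv_inner_left_diff: "GDERIV (\<lambda>y. inner c (y - w)) z :> c"
  unfolding gderiv_def by (auto intro!: derivative_eq_intros simp: inner_commute)

lemma strongly_convex_composite_minimizer_ineq:
  fixes f :: "'a::real_inner \<Rightarrow> real" and \<phi> :: "'a \<Rightarrow> ereal"
  assumes min: "\<And>y. ereal (f z) + \<phi> z \<le> ereal (f y) + \<phi> y"
    and grad: "GDERIV f z :> g"
    and conv: "strongly_convex_ereal \<gamma> \<phi>"
    and fin_z: "\<phi> z = ereal a" and fin_w: "\<phi> w = ereal b"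
  shows "a - b \<le> inner g (w - z) - \<gamma> / 2 * (norm (w - z))\<^sup>2"
proof -
  define d where "d = w - z"
  define q where "q = (\<lambda>s. (f (z + s *\<^sub>R d) - f z) / s - \<gamma> / 2 * (1 - s) * (norm d)\<^sup>2)"
  have step: "a - b \<le> q s" if s: "s \<in> {0<..<1}" for s
  proof -
    have ys: "(1 - s) *\<^sub>R z + s *\<^sub>R w = z + s *\<^sub>R d"
      unfolding d_def by (simp add: algebra_simps)
    have cvx: "\<phi> (z + s *\<^sub>R d) \<le> ereal ((1 - s) * a + s * b - \<gamma> / 2 * s * (1 - s) * (norm d)\<^sup>2)"
    proof -
      have "\<phi> ((1 - s) *\<^sub>R z + s *\<^sub>R w)
          \<le> ereal (1 - s) * \<phi> z + ereal s * \<phi> w - ereal (\<gamma> / 2 * s * (1 - s) * (norm (z - w))\<^sup>2)"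
        using conv s unfolding strongly_convex_ereal_def by blast
      then show ?thesis
        by (simp add: ys fin_z fin_w d_def norm_minus_commute)
    qed
    have "ereal (f z + a) \<le> ereal (f (z + s *\<^sub>R d)) + \<phi> (z + s *\<^sub>R d)"
      using min[of "z + s *\<^sub>R d"] fin_z by simp
    also have "\<dots> \<le> ereal (f (z + s *\<^sub>R d) + ((1 - s) * a + s * b - \<gamma> / 2 * s * (1 - s) * (norm d)\<^sup>2))"
      using add_left_mono[OF cvx, of "ereal (f (z + s *\<^sub>R d))"] by simp
    finally have "s * (a - b) \<le> f (z + s *\<^sub>R d) - f z - s * (\<gamma> / 2 * (1 - s) * (norm d)\<^sup>2)"
      by (simp add: algebra_simps)
    then have "a - b \<le> (f (z + s *\<^sub>R d) - f z - s * (\<gamma> / 2 * (1 - s) * (norm d)\<^sup>2)) / s"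
      using s by (simp add: le_divide_eq mult.commute)
    also have "\<dots> = q s"
      using s unfolding q_def by (simp add: diff_divide_distrib)
    finally show ?thesis .
  qed
  have "(q \<longlongrightarrow> inner g d - \<gamma> / 2 * (1 - 0) * (norm d)\<^sup>2) (at_right 0)"
    unfolding q_def by (intro tendsto_intros gderiv_difference_quotient_at_right[OF grad])
  moreover have "eventually (\<lambda>s. a - b \<le> q s) (at_right 0)"
    using step eventually_at_right_real[of 0 1] by (auto elim: eventually_mono)
  ultimately show ?thesis
    using tendsto_lowerbound unfolding d_def by fastforce
qed

lemma ereal_finite_if_bounded_by_finite:
  fixes u v :: ereal
  assumes "ereal a + u + ereal b \<le> ereal c + v + ereal d" "v \<noteq> \<infinity>" "u \<noteq> -\<infinity>"
  shows "\<exists>r. u = ereal r"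
  using assms by (cases u; cases v) auto

theorem lemma1:
  fixes m n :: nat
    and l :: "nat \<Rightarrow> nat \<Rightarrow> 'a::euclidean_space \<Rightarrow> real"
    and gL :: "nat \<Rightarrow> 'a \<Rightarrow> 'a"
    and h :: "'a \<Rightarrow> ereal"
    and A :: "nat \<Rightarrow> nat set"
    and x :: "nat \<Rightarrow> 'a"
    and \<rho> \<gamma> L \<delta> \<tau> :: real
  assumes m: "m \<ge> 2" and n: "n \<ge> 1"
    and smooth: "\<And>j i. j \<in> {1..m} \<Longrightarrow> i \<in> {1..n} \<Longrightarrow> (\<forall>y. l j i differentiable (at y))"
    and h_proper: "proper_fun h" and h_lsc: "lsc_fun h" and h_convex: "convex_ereal h"
    and A_sub: "\<And>t. A t \<subseteq> {1..m}" and A0: "A 0 = {1..m}"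
    and rho: "\<rho> \<ge> 0"
    and gamma: "\<And>c. strongly_convex_ereal \<gamma> (\<lambda>y. h y + ereal (\<rho> / 2 * (norm (y - c))\<^sup>2))"
    and update: "\<And>t y. ereal (Lloc n l 1 (x (Suc t))) + h (x (Suc t))
                    + ereal (\<rho> / 2 * (norm (x (Suc t) - x t))\<^sup>2 + inner (corr m gL A x t) (x (Suc t) - x t))
                  \<le> ereal (Lloc n l 1 y) + h y
                    + ereal (\<rho> / 2 * (norm (y - x t))\<^sup>2 + inner (corr m gL A x t) (y - x t))"
    and A2_grad: "\<And>j y. j \<in> {1..m} \<Longrightarrow> GDERIV (Lloc n l j) y :> gL j y"
    and A2_lip: "\<And>j y z. j \<in> {1..m} \<Longrightarrow> norm (gL j y - gL j z) \<le> L * norm (y - z)"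
    and A4_delta: "\<delta> > 0" and A4_tau: "\<tau> \<ge> 0"
    and A4_gamma: "\<gamma> > 3 * L + 2 * L * \<delta> * \<tau>"
    and A4_rho: "\<rho> > 2 * L * \<tau> / \<delta>"
    and t: "t \<ge> 1"
  shows "ereal (\<rho> / 2 * (norm (x (t + 1) - x t))\<^sup>2) + h (x (t + 1))
           - ereal (\<rho> / 2 * (norm (x t - x (t - 1)))\<^sup>2) - h (x t)
         \<le> ereal (- inner (gL 1 (x (t + 1)) + corr m gL A x t) (x (t + 1) - x t)
                  - \<gamma> / 2 * (norm (x (t + 1) - x t))\<^sup>2
                  - \<rho> / 2 * (norm (x t - x (t - 1)))\<^sup>2)"
proof -
  define z w c where "z = x (Suc t)" and "w = x t" and "c = corr m gL A x t"
  define f where "f = (\<lambda>y. Lloc n l 1 y + inner c (y - w))"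
  define \<phi> where "\<phi> = (\<lambda>y. h y + ereal (\<rho> / 2 * (norm (y - w))\<^sup>2))"
  obtain y0 where y0: "h y0 \<noteq> \<infinity>" and not_minf: "\<And>y. h y \<noteq> -\<infinity>"
    using h_proper unfolding proper_fun_def by blast
  obtain hw where hw: "h w = ereal hw"
    using ereal_finite_if_bounded_by_finite[OF update[of "t - 1" y0] y0 not_minf] t
    unfolding w_def by auto
  obtain hz where hz: "h z = ereal hz"
    using ereal_finite_if_bounded_by_finite[OF update[of t y0] y0 not_minf] unfolding z_def by blast
  have "hz + \<rho> / 2 * (norm (z - w))\<^sup>2 - hw \<le> inner (gL 1 z + c) (w - z) - \<gamma> / 2 * (norm (w - z))\<^sup>2"
  proof (rule strongly_convex_composite_minimizer_ineq)
    show "ereal (f z) + \<phi> z \<le> ereal (f y) + \<phi> y" for y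
      using update[of t y] unfolding f_def \<phi>_def z_def w_def c_def by (simp add: ac_simps)
    show "GDERIV f z :> gL 1 z + c"
      unfolding f_def using A2_grad[of 1] m by (intro GDERIV_add gderiv_inner_left_diff) auto
    show "strongly_convex_ereal \<gamma> \<phi>"
      unfolding \<phi>_def by (rule gamma)
  qed (simp_all add: \<phi>_def hz hw)
  then show ?thesis
    using hz hw unfolding z_def w_def c_def
    by (simp add: norm_minus_commute inner_diff_right)
qed

end
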